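(* Assume CH. Then for every sequence $\bar p=\langle p_\delta:\delta<\omega_1\rangle$ of partitions $p_\delta:[\omega_1]^2\to\omega$ the following all hold: $\aleph_1\nrightarrow_{\bar p}[\aleph_1]^2_{\aleph_1}$; $\aleph_1\nrightarrow_{\bar p}[\aleph_1\circledast\aleph_1]^2_{\aleph_1}$; $\aleph_1\nrightarrow_{\bar p}[\aleph_0\circledast\aleph_1/1\circledast\aleph_1]^2_{\aleph_1}$; $\Pr_1(\aleph_1,\aleph_1,\aleph_1,\aleph_0)_{\bar p}$; $\Pr_0(\aleph_1,\aleph_1,\aleph_1,\aleph_0)_{\bar p}$.
   Context: For $f:[\kappa]^2\to\lambda$ and $p:[\kappa]^2\to\theta$, $X\subseteq[\kappa]^2$ is $(f,p)$-strong if for every $\zeta:\theta\to\lambda$ there is $\{\alpha,\beta\}\in X$ with $f(\alpha,\beta)=\zeta(p(\alpha,\beta))$. $A\circledast B=\{\{\alpha,\beta\}:\alpha<\beta,\ \alpha\in A,\ \beta\in B\}$. For a partition $p$: $\kappa\nrightarrow_p[\mu]^2_\lambda$ means there is $f:[\kappa]^2\to\lambda$ with $[A]^2$ $(f,p)$-strong for all $A\in[\kappa]^\mu$; $\kappa\nrightarrow_p[\mu_1\circledast\mu_2]^2_\lambda$ means there is $f$ with $A\circledast B$ $(f,p)$-strong for all $A\in[\kappa]^{\mu_1},B\in[\kappa]^{\mu_2}$; $\aleph_1\nrightarrow_p[\aleph_0\circledast\aleph_1/1\circledast\aleph_1]^2_\lambda$ means there is $f:[\omega_1]^2\to\lambda$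 such that for every countably infinite $A\subseteq\omega_1$ and uncountable $B\subseteq\omega_1$ there is $\alpha\in A$ with $\{\alpha\}\circledast B$ $(f,p)$-strong. $\Pr_1(\kappa,\mu,\lambda,\chi)_p$: there is $f$ such that for every $\xi<\chi$, every family $\mathcal A\subseteq[\kappa]^{<\xi}$ of $\mu$ pairwise disjoint nonempty sets and every $\zeta\in\lambda^\theta$ there are $a,b\in\mathcal A$, $\max a<\min b$, with $f(\alpha,\beta)=\zeta(p(\alpha,\beta))$ for all $\alpha\in a,\beta\in b$. $\Pr_0(\kappa,\mu,\lambda,\chi)_p$: there is $f$ such that for every $\xi<\chi$, every pairwise disjoint $\mathcal A\subseteq[\kappa]^\xi$ with $|\mathcal A|=\mu$ and every matrix $\langle\zeta_{i,j}:i,j<\xi\rangle$ of elements of $\lambda^\theta$ there are $a,b\in\mathcal A$ with $\max a<\min b$ and $f(a(i),b(j))=\zeta_{i,j}(p(a(i),b(j)))$ for all $i,j<\xi$ ($a(i)$ the $i$-th element of $a$ in increasing order). With a sequence $\bar p=\langle p_\delta\rangle$: a single $f$ witnesses the symbol for every $p_\delta$. *)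

theory Defs
  imports Complex_Main "HOL-Library.Countable_Set"
begin

text \<open>omega_1 is represented by a wellorder type 'a which is uncountable and all of whose
proper initial segments are countable.  A pair {alpha,beta} with alpha < beta is represented
by the ordered pair (alpha,beta); colourings and partitions are curried functions, only their
values at alpha < beta matter.\<close>

definition omega1_type :: "'a::wellorder itself \<Rightarrow> bool" where
  "omega1_type _ \<longleftrightarrow> uncountable (UNIV :: 'a set) \<and> (\<forall>x::'a. countable {y. y < x})"

definition CH :: "'a itself \<Rightarrow> bool" where
  "CH _ \<longleftrightarrow> (\<exists>g :: real \<Rightarrow> 'a. bij g)"

definition circledast :: "'a::linorder set \<Rightarrow> 'a set \<Rightarrow> ('a \<times> 'a) set" (infixl "\<circledast>" 70) where
  "A \<circledast> B = {(\<alpha>, \<beta>). \<alpha> < \<beta> \<and> \<alpha> \<in> A \<and> \<beta> \<in> B}"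

definition strong :: "('a \<Rightarrow> 'a \<Rightarrow> 'l) \<Rightarrow> ('a \<Rightarrow> 'a \<Rightarrow> 't) \<Rightarrow> ('a \<times> 'a) set \<Rightarrow> bool" where
  "strong f p X \<longleftrightarrow> (\<forall>\<zeta> :: 't \<Rightarrow> 'l. \<exists>(\<alpha>, \<beta>) \<in> X. f \<alpha> \<beta> = \<zeta> (p \<alpha> \<beta>))"

text \<open>Symbols for kappa = mu = lambda = aleph_1 (colours in 'a itself), theta = omega,
with a sequence pbar of partitions indexed by delta < omega_1.\<close>

definition neg_sq :: "('a::linorder \<Rightarrow> 'a \<Rightarrow> 'a \<Rightarrow> nat) \<Rightarrow> bool" where
  "neg_sq pbar \<longleftrightarrow> (\<exists>f :: 'a \<Rightarrow> 'a \<Rightarrow> 'a. \<forall>\<delta> A.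
      uncountable A \<longrightarrow> strong f (pbar \<delta>) (A \<circledast> A))"

definition neg_rect :: "('a::linorder \<Rightarrow> 'a \<Rightarrow> 'a \<Rightarrow> nat) \<Rightarrow> bool" where
  "neg_rect pbar \<longleftrightarrow> (\<exists>f :: 'a \<Rightarrow> 'a \<Rightarrow> 'a. \<forall>\<delta> A B.
      uncountable A \<longrightarrow> uncountable B \<longrightarrow> strong f (pbar \<delta>) (A \<circledast> B))"

definition neg_one_rect :: "('a::linorder \<Rightarrow> 'a \<Rightarrow> 'a \<Rightarrow> nat) \<Rightarrow> bool" where
  "neg_one_rect pbar \<longleftrightarrow> (\<exists>f :: 'a \<Rightarrow> 'a \<Rightarrow> 'a. \<forall>\<delta> A B.
      countable A \<longrightarrow> infinite A \<longrightarrow> uncountable B \<longrightarrow>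
      (\<exists>\<alpha>\<in>A. strong f (pbar \<delta>) ({\<alpha>} \<circledast> B)))"

definition Pr1 :: "('a::linorder \<Rightarrow> 'a \<Rightarrow> 'a \<Rightarrow> nat) \<Rightarrow> bool" where
  "Pr1 pbar \<longleftrightarrow> (\<exists>f :: 'a \<Rightarrow> 'a \<Rightarrow> 'a. \<forall>\<delta> (\<xi>::nat) (\<A>::'a set set) (\<zeta>::nat \<Rightarrow> 'a).
      (\<forall>a\<in>\<A>. finite a \<and> card a < \<xi> \<and> a \<noteq> {}) \<longrightarrow>
      (\<forall>a\<in>\<A>. \<forall>b\<in>\<A>. a \<noteq> b \<longrightarrow> a \<inter> b = {}) \<longrightarrow>
      uncountable \<A> \<longrightarrow>
      (\<exists>a\<in>\<A>. \<exists>b\<in>\<A>. Max a < Min b \<and>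
         (\<forall>\<alpha>\<in>a. \<forall>\<beta>\<in>b. f \<alpha> \<beta> = \<zeta> (pbar \<delta> \<alpha> \<beta>))))"

definition Pr0 :: "('a::linorder \<Rightarrow> 'a \<Rightarrow> 'a \<Rightarrow> nat) \<Rightarrow> bool" where
  "Pr0 pbar \<longleftrightarrow> (\<exists>f :: 'a \<Rightarrow> 'a \<Rightarrow> 'a. \<forall>\<delta> (\<xi>::nat) (\<A>::'a set set) (\<zeta>::nat \<Rightarrow> nat \<Rightarrow> nat \<Rightarrow> 'a).
      (\<forall>a\<in>\<A>. finite a \<and> card a = \<xi>) \<longrightarrow>
      (\<forall>a\<in>\<A>. \<forall>b\<in>\<A>. a \<noteq> b \<longrightarrow> a \<inter> b = {}) \<longrightarrow>
      uncountable \<A> \<longrightarrow>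
      (\<exists>a\<in>\<A>. \<exists>b\<in>\<A>. Max a < Min b \<and>
         (\<forall>i<\<xi>. \<forall>j<\<xi>.
            f (sorted_list_of_set a ! i) (sorted_list_of_set b ! j)
              = \<zeta> i j (pbar \<delta> (sorted_list_of_set a ! i) (sorted_list_of_set b ! j)))))"

end

theory Submission
  imports Defs "HOL-Analysis.Abstract_Topology_2"
begin

text \<open>Under CH there are only \<open>\<aleph>\<^sub>1\<close> patterns \<open>(c, \<delta>, Z)\<close>, where \<open>c\<close> is an
\<open>\<omega>\<close>-sequence of pairwise disjoint finite sets, \<open>\<delta>\<close> a partition index and \<open>Z\<close> a table of
prescribed colours; enumerate them as \<open>T \<eta>\<close>, \<open>\<eta> < \<omega>\<^sub>1\<close>. The colouring \<open>col \<beta> \<alpha>\<close> is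
defined by recursion on \<open>\<beta>\<close>: at stage \<open>\<beta>\<close> every task \<open>(\<eta>, s)\<close> with \<open>\<eta> < \<beta>\<close> and \<open>s\<close> a
list of ordinals below \<open>\<beta>\<close> is visited infinitely often. A visit selects a candidate \<open>c n\<close>,
i.e. one that already realises \<open>Z\<close> against every member of \<open>s\<close>, which is disjoint from the
finitely many points coloured so far at this stage, and colours \<open>c n \<times> {\<beta>}\<close> as \<open>Z\<close>
prescribes. Hence infinitely many candidates survive each extension of \<open>s\<close> by a new
\<open>\<beta> > \<eta>\<close>, so every increasing finite list above \<open>\<eta>\<close> and all \<open>c n\<close> is realised by some
\<open>c n\<close>. The five symbols follow by choosing \<open>c\<close> to consist of singletons from a countable
set or of members of an uncountable disjoint family.\<close>

lemma omega1_countable_bounded: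
  assumes "omega1_type TYPE('a::wellorder)" and "countable (S::'a set)"
  shows "\<exists>\<gamma>. \<forall>x\<in>S. x < \<gamma>"
proof (rule ccontr)
  assume "\<not> ?thesis"
  hence "UNIV \<subseteq> (\<Union>x\<in>S. {y. y < x} \<union> {x})" by (auto simp: not_less order_le_less)
  moreover have "countable (\<Union>x\<in>S. {y. y < x} \<union> {x})"
    using assms unfolding omega1_type_def by auto
  ultimately show False using assms unfolding omega1_type_def
    by (metis countable_subset)
qed

lemma omega1_uncountable_unbounded:
  assumes "omega1_type TYPE('a::wellorder)" and "uncountable (A::'a set)"
  shows "\<exists>x\<in>A. \<gamma> < x"
proof (rule ccontr)
  assume "\<not> ?thesis"
  hence "A \<subseteq> {y. y < \<gamma>} \<union> {\<gamma>}" by (auto simp: not_less order_le_less)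
  moreover have "countable ({y. y < \<gamma>} \<union> {\<gamma>})"
    using assms(1) unfolding omega1_type_def by auto
  ultimately show False using assms(2) countable_subset by blast
qed

lemma omega1_disjoint_family_unbounded:
  assumes "omega1_type TYPE('a::wellorder)" and "uncountable (\<A>::'a set set)"
    and "\<forall>a\<in>\<A>. \<forall>b\<in>\<A>. a \<noteq> b \<longrightarrow> a \<inter> b = {}"
  shows "\<exists>b\<in>\<A>. \<forall>x\<in>b. \<gamma> < x"
proof (rule ccontr)
  assume "\<not> ?thesis"
  then obtain w where w: "\<And>b. b \<in> \<A> \<Longrightarrow> w b \<in> b \<and> w b \<le> \<gamma>"
    by (metis not_less)
  have "inj_on w \<A>"
    by (rule inj_onI) (metis w assms(3) disjoint_iff)
  moreover have "w ` \<A> \<subseteq> {y. y < \<gamma>} \<union> {\<gamma>}" using w by (auto simp: order_le_less)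
  moreover have "countable ({y. y < \<gamma>} \<union> {\<gamma>})"
    using assms(1) unfolding omega1_type_def by auto
  ultimately have "countable \<A>"
    by (meson countable_image_inj_on countable_subset)
  thus False using assms(2) by simp
qed

type_synonym 'a pattern = "(nat \<Rightarrow> 'a set) \<times> 'a \<times> (nat \<Rightarrow> nat \<Rightarrow> nat \<Rightarrow> nat \<Rightarrow> 'a)"

text \<open>Given an injection \<open>h\<close> into \<open>nat set\<close>, a pattern with finite sets \<open>c n\<close> is coded by a set of
lists of naturals: \<open>[n, m]\<close> records \<open>m = card (c n)\<close>, \<open>[n, i, x]\<close> that \<open>x \<in> h\<close> of the
\<open>i\<close>-th element of \<open>c n\<close>, \<open>[x]\<close> that \<open>x \<in> h \<delta>\<close>, and \<open>[n, i, j, l, x]\<close> that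
\<open>x \<in> h (Z n i j l)\<close>.\<close>

definition pattern_code :: "('a::linorder \<Rightarrow> nat set) \<Rightarrow> 'a pattern \<Rightarrow> nat list set" where
  "pattern_code h r = (case r of (c, \<delta>, Z) \<Rightarrow> {xs.
     (length xs = 2 \<and> xs ! 1 = length (sorted_list_of_set (c (xs ! 0))))
   \<or> (length xs = 3 \<and> xs ! 1 < length (sorted_list_of_set (c (xs ! 0)))
        \<and> xs ! 2 \<in> h (sorted_list_of_set (c (xs ! 0)) ! (xs ! 1)))
   \<or> (length xs = 1 \<and> xs ! 0 \<in> h \<delta>)
   \<or> (length xs = 5 \<and> xs ! 4 \<in> h (Z (xs ! 0) (xs ! 1) (xs ! 2) (xs ! 3)))})"

lemma pattern_code_simps:
  "[n, m] \<in> pattern_code h (c, \<delta>, Z) \<longleftrightarrow> m = length (sorted_list_of_set (c n))"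
  "[n, i, x] \<in> pattern_code h (c, \<delta>, Z) \<longleftrightarrow>
     i < length (sorted_list_of_set (c n)) \<and> x \<in> h (sorted_list_of_set (c n) ! i)"
  "[x] \<in> pattern_code h (c, \<delta>, Z) \<longleftrightarrow> x \<in> h \<delta>"
  "[n, i, j, l, x] \<in> pattern_code h (c, \<delta>, Z) \<longleftrightarrow> x \<in> h (Z n i j l)"
  by (simp_all add: pattern_code_def)

lemma pattern_code_inj:
  assumes h: "inj h" and fin1: "\<forall>n. finite (c1 n)" and fin2: "\<forall>n. finite (c2 n)"
    and eq: "pattern_code h (c1, \<delta>1, Z1) = pattern_code h (c2, \<delta>2, Z2)"
  shows "(c1, \<delta>1, Z1) = (c2, \<delta>2, Z2)"
proof -
  let ?L1 = "\<lambda>n. sorted_list_of_set (c1 n)" and ?L2 = "\<lambda>n. sorted_list_of_set (c2 n)"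
  have mem: "xs \<in> pattern_code h (c1, \<delta>1, Z1) \<longleftrightarrow> xs \<in> pattern_code h (c2, \<delta>2, Z2)" for xs
    using eq by simp
  have len: "length (?L1 n) = length (?L2 n)" for n
    using mem[of "[n, length (?L1 n)]"] by (simp add: pattern_code_simps)
  have "h (?L1 n ! i) = h (?L2 n ! i)" if "i < length (?L1 n)" for n i
    using mem[of "[n, i, x]" for x] len that by (auto simp: pattern_code_simps)
  hence "?L1 n = ?L2 n" for n
    using len h by (metis nth_equalityI inj_eq)
  hence "c1 = c2"
    using fin1 fin2 by (metis ext sorted_list_of_set.set_sorted_key_list_of_set)
  moreover have "h \<delta>1 = h \<delta>2"
    using mem[of "[x]" for x] by (auto simp: pattern_code_simps)
  moreover have "h (Z1 n i j l) = h (Z2 n i j l)" for n i j l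
    using mem[of "[n, i, j, l, x]" for x] by (auto simp: pattern_code_simps)
  ultimately show ?thesis
    using h by (simp add: inj_eq fun_eq_iff)
qed

lemma CH_enumerates_patterns:
  assumes "CH TYPE('a::wellorder)"
  shows "\<exists>T :: 'a \<Rightarrow> 'a pattern. \<forall>c \<delta> Z. (\<forall>n. finite (c n)) \<longrightarrow> (\<exists>\<eta>. T \<eta> = (c, \<delta>, Z))"
proof -
  obtain g :: "real \<Rightarrow> 'a" where g: "bij g" using assms unfolding CH_def by blast
  obtain q :: "nat set \<Rightarrow> real" where q: "bij q"
    using nat_sets_eqpoll_reals unfolding eqpoll_def by blast
  define k where "k = g \<circ> q"
  have k: "bij k" unfolding k_def using g q by (simp add: bij_comp)
  have h: "inj (inv k)" using k by (simp add: bij_imp_bij_inv bij_is_inj)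
  define enc where "enc r = k (to_nat ` pattern_code (inv k) r)" for r :: "'a pattern"
  define D where "D = {r :: 'a pattern. \<forall>n. finite (fst r n)}"
  have "inj_on enc D"
  proof (rule inj_onI)
    fix r1 r2 assume r: "r1 \<in> D" "r2 \<in> D" "enc r1 = enc r2"
    hence "pattern_code (inv k) r1 = pattern_code (inv k) r2"
      using k unfolding enc_def by (simp add: bij_is_inj inj_eq inj_image_eq_iff)
    thus "r1 = r2"
      using pattern_code_inj[OF h] r unfolding D_def by (cases r1, cases r2) auto
  qed
  hence "\<forall>r\<in>D. inv_into D enc (enc r) = r" by simp
  moreover have "(c, \<delta>, Z) \<in> D" if "\<forall>n. finite (c n)" for c \<delta> Z
    using that unfolding D_def by simp
  ultimately show ?thesis by blast
qed

definition disjoint_finite_seq :: "(nat \<Rightarrow> 'a set) \<Rightarrow> bool" where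
  "disjoint_finite_seq c \<longleftrightarrow>
     (\<forall>n. finite (c n) \<and> c n \<noteq> {}) \<and> (\<forall>n m. n \<noteq> m \<longrightarrow> c n \<inter> c m = {})"

lemma finite_members_meeting:
  assumes "disjoint_finite_seq c" and "finite U"
  shows "finite {n. c n \<inter> U \<noteq> {}}"
proof -
  have "finite {n. x \<in> c n}" for x
  proof (cases "\<exists>n0. x \<in> c n0")
    case True
    then obtain n0 where "x \<in> c n0" by blast
    hence "{n. x \<in> c n} \<subseteq> {n0}"
      using assms(1) unfolding disjoint_finite_seq_def by blast
    thus ?thesis by (rule finite_subset) simp
  qed simp
  moreover have "{n. c n \<inter> U \<noteq> {}} \<subseteq> (\<Union>x\<in>U. {n. x \<in> c n})" by auto
  ultimately show ?thesis using assms(2) by (meson finite_UN_I finite_subset)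
qed

abbreviation srt :: "'a::linorder set \<Rightarrow> 'a list" where
  "srt \<equiv> sorted_list_of_set"

locale pattern_enumeration =
  fixes P :: "'a::wellorder \<Rightarrow> 'a \<Rightarrow> 'a \<Rightarrow> nat"
    and T :: "'a \<Rightarrow> 'a pattern"
  assumes omega1: "omega1_type TYPE('a)"
    and T_onto: "\<And>c \<delta> Z. (\<And>n. finite (c n)) \<Longrightarrow> \<exists>\<eta>. T \<eta> = (c, \<delta>, Z)"
begin

text \<open>Colourings are written \<open>F \<beta> \<alpha>\<close> for the colour of \<open>{\<alpha>, \<beta>}\<close>, \<open>\<alpha> < \<beta>\<close>.\<close>

definition realizes ::
    "('a \<Rightarrow> 'a \<Rightarrow> 'a) \<Rightarrow> (nat \<Rightarrow> 'a set) \<Rightarrow> 'a \<Rightarrow> (nat \<Rightarrow> nat \<Rightarrow> nat \<Rightarrow> nat \<Rightarrow> 'a) \<Rightarrow> nat \<Rightarrow> nat \<Rightarrow> 'a \<Rightarrow> bool"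
  where "realizes F c \<delta> Z n j \<beta> \<longleftrightarrow>
    (\<forall>i<card (c n). F \<beta> (srt (c n) ! i) = Z n i j (P \<delta> (srt (c n) ! i) \<beta>))"

definition candidates :: "('a \<Rightarrow> 'a \<Rightarrow> 'a) \<Rightarrow> 'a \<times> 'a list \<Rightarrow> nat set" where
  "candidates F t = (case T (fst t) of (c, \<delta>, Z) \<Rightarrow>
     if disjoint_finite_seq c then {n. \<forall>j<length (snd t). realizes F c \<delta> Z n j (snd t ! j)} else {})"

definition tasks :: "'a \<Rightarrow> ('a \<times> 'a list) set" where
  "tasks \<beta> = {t. fst t < \<beta> \<and> set (snd t) \<subseteq> {x. x < \<beta>}}"

text \<open>Pairing with \<open>nat\<close> makes every task of stage \<open>\<beta>\<close> recur infinitely often.\<close>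

definition task :: "'a \<Rightarrow> nat \<Rightarrow> 'a \<times> 'a list" where
  "task \<beta> m = fst (from_nat_into (tasks \<beta> \<times> (UNIV::nat set)) m)"

definition pick :: "('a \<Rightarrow> 'a \<Rightarrow> 'a) \<Rightarrow> 'a \<Rightarrow> nat \<Rightarrow> 'a set \<Rightarrow> nat option" where
  "pick F \<beta> m U = (let t = task \<beta> m; c = fst (T (fst t)) in
     if \<exists>n\<in>candidates F t. c n \<inter> U = {}
     then Some (SOME n. n \<in> candidates F t \<and> c n \<inter> U = {}) else None)"

definition claim :: "('a \<Rightarrow> 'a \<Rightarrow> 'a) \<Rightarrow> 'a \<Rightarrow> nat \<Rightarrow> 'a set \<Rightarrow> 'a set" where
  "claim F \<beta> m U = (case pick F \<beta> m U of None \<Rightarrow> {} | Some n \<Rightarrow> fst (T (fst (task \<beta> m))) n)"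

primrec used :: "('a \<Rightarrow> 'a \<Rightarrow> 'a) \<Rightarrow> 'a \<Rightarrow> nat \<Rightarrow> 'a set" where
  "used F \<beta> 0 = {}"
| "used F \<beta> (Suc m) = used F \<beta> m \<union> claim F \<beta> m (used F \<beta> m)"

definition claimed :: "('a \<Rightarrow> 'a \<Rightarrow> 'a) \<Rightarrow> 'a \<Rightarrow> nat \<Rightarrow> 'a set" where
  "claimed F \<beta> m = claim F \<beta> m (used F \<beta> m)"

text \<open>Points never claimed at stage \<open>\<beta>\<close> get the irrelevant colour \<open>\<alpha>\<close>.\<close>

definition stage_colour :: "('a \<Rightarrow> 'a \<Rightarrow> 'a) \<Rightarrow> 'a \<Rightarrow> 'a \<Rightarrow> 'a" where
  "stage_colour F \<beta> \<alpha> = (if \<exists>m. \<alpha> \<in> claimed F \<beta> m then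
     (let m = SOME m. \<alpha> \<in> claimed F \<beta> m; t = task \<beta> m; n = the (pick F \<beta> m (used F \<beta> m)) in
      case T (fst t) of (c, \<delta>, Z) \<Rightarrow>
        Z n (THE i. i < card (c n) \<and> srt (c n) ! i = \<alpha>) (length (snd t)) (P \<delta> \<alpha> \<beta>))
     else \<alpha>)"

definition col :: "'a \<Rightarrow> 'a \<Rightarrow> 'a" where
  "col = wfrec {(x, y). x < y} stage_colour"

lemma col_unfold: "col \<beta> = stage_colour (cut col {(x, y). x < y} \<beta>) \<beta>"
  unfolding col_def by (rule wfrec[OF wf])

lemma pick_SomeD:
  assumes "pick F \<beta> m U = Some n"
  shows "n \<in> candidates F (task \<beta> m)" and "fst (T (fst (task \<beta> m))) n \<inter> U = {}"
proof -
  let ?t = "task \<beta> m"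
  have ex: "\<exists>n\<in>candidates F ?t. fst (T (fst ?t)) n \<inter> U = {}"
    and n: "n = (SOME n. n \<in> candidates F ?t \<and> fst (T (fst ?t)) n \<inter> U = {})"
    using assms unfolding pick_def Let_def by (auto split: if_splits)
  show "n \<in> candidates F ?t" and "fst (T (fst ?t)) n \<inter> U = {}"
    using someI_ex[OF ex[unfolded Bex_def]] unfolding n[symmetric] by auto
qed

lemma candidates_disjoint_finite_seq:
  "n \<in> candidates F t \<Longrightarrow> disjoint_finite_seq (fst (T (fst t)))"
  unfolding candidates_def by (cases "T (fst t)") (auto split: if_splits)

lemma candidates_eq:
  assumes "T \<eta> = (c, \<delta>, Z)" and "disjoint_finite_seq c"
  shows "candidates F (\<eta>, s) = {n. \<forall>j<length s. realizes F c \<delta> Z n j (s ! j)}"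
  unfolding candidates_def using assms by simp

lemma candidates_cut:
  assumes "set (snd t) \<subseteq> {x. x < \<beta>}"
  shows "candidates (cut F {(x, y). x < y} \<beta>) t = candidates F t"
proof -
  have "cut F {(x, y). x < y} \<beta> (snd t ! j) = F (snd t ! j)" if "j < length (snd t)" for j
    using assms that nth_mem by (fastforce intro: cut_apply)
  thus ?thesis unfolding candidates_def realizes_def by (auto split: prod.splits)
qed

lemma finite_claim: "finite (claim F \<beta> m U)"
proof (cases "pick F \<beta> m U")
  case (Some n)
  then show ?thesis
    using pick_SomeD[OF Some] candidates_disjoint_finite_seq
    unfolding claim_def disjoint_finite_seq_def by fastforce
qed (simp add: claim_def)

lemma finite_used: "finite (used F \<beta> m)"
  by (induction m) (auto simp: finite_claim)

lemma used_mono: "m \<le> m' \<Longrightarrow> used F \<beta> m \<subseteq> used F \<beta> m'"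
  by (induction m' rule: dec_induct) auto

lemma claimed_subset_used: "m < m' \<Longrightarrow> claimed F \<beta> m \<subseteq> used F \<beta> m'"
  using used_mono[of "Suc m" m' F \<beta>] unfolding claimed_def by auto

lemma claimed_disjoint_used: "claimed F \<beta> m \<inter> used F \<beta> m = {}"
proof (cases "pick F \<beta> m (used F \<beta> m)")
  case (Some n)
  then show ?thesis using pick_SomeD[OF Some] unfolding claimed_def claim_def by auto
qed (simp add: claimed_def claim_def)

lemma claimed_disjoint:
  assumes "m \<noteq> m'" shows "claimed F \<beta> m \<inter> claimed F \<beta> m' = {}"
  using assms claimed_subset_used claimed_disjoint_used
  by (metis disjoint_iff linorder_neqE_nat subsetD)

lemma countable_tasks: "countable (tasks \<beta>)"
proof -
  have "countable {x. x < \<beta>}" using omega1 unfolding omega1_type_def by auto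
  moreover have "tasks \<beta> \<subseteq> {x. x < \<beta>} \<times> lists {x. x < \<beta>}" unfolding tasks_def by auto
  ultimately show ?thesis by (meson countable_SIGMA countable_lists countable_subset)
qed

lemma task_recurs:
  assumes "t \<in> tasks \<beta>"
  shows "infinite {m. task \<beta> m = t}"
proof -
  let ?W = "tasks \<beta> \<times> (UNIV::nat set)"
  define mk where "mk k = to_nat_on ?W (t, k)" for k
  have mk: "from_nat_into ?W (mk k) = (t, k)" for k
    unfolding mk_def using countable_tasks assms by (simp add: from_nat_into_to_nat_on)
  have "inj mk"
  proof (rule injI)
    fix a b assume "mk a = mk b"
    hence "from_nat_into ?W (mk a) = from_nat_into ?W (mk b)" by simp
    thus "a = b" by (simp add: mk)
  qed
  hence "infinite (range mk)" by (simp add: range_inj_infinite)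
  moreover have "range mk \<subseteq> {m. task \<beta> m = t}" using mk unfolding task_def by auto
  ultimately show ?thesis using infinite_super by blast
qed

lemma pick_defined:
  assumes "infinite (candidates F (task \<beta> m))"
  shows "\<exists>n. pick F \<beta> m (used F \<beta> m) = Some n"
proof -
  let ?t = "task \<beta> m" let ?c = "fst (T (fst ?t))"
  have "disjoint_finite_seq ?c"
    using assms candidates_disjoint_finite_seq by (metis finite.emptyI ex_in_conv)
  hence "finite {n. ?c n \<inter> used F \<beta> m \<noteq> {}}"
    using finite_members_meeting finite_used by blast
  hence "infinite (candidates F ?t - {n. ?c n \<inter> used F \<beta> m \<noteq> {}})" using assms by simp
  hence "\<exists>n\<in>candidates F ?t. ?c n \<inter> used F \<beta> m = {}"
    by (metis (mono_tags, lifting) DiffE finite.emptyI mem_Collect_eq ex_in_conv)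
  thus ?thesis unfolding pick_def Let_def by auto
qed

lemma stage_colour_claimed:
  assumes pick: "pick F \<beta> m (used F \<beta> m) = Some n" and Tt: "T (fst (task \<beta> m)) = (c, \<delta>, Z)"
    and i: "i < card (c n)"
  shows "stage_colour F \<beta> (srt (c n) ! i) = Z n i (length (snd (task \<beta> m))) (P \<delta> (srt (c n) ! i) \<beta>)"
proof -
  define \<alpha> where "\<alpha> = srt (c n) ! i"
  have "finite (c n)"
    using candidates_disjoint_finite_seq[OF pick_SomeD(1)[OF pick]] Tt
    unfolding disjoint_finite_seq_def by simp
  hence len: "length (srt (c n)) = card (c n)" and "\<alpha> \<in> c n"
    using i unfolding \<alpha>_def
    by (simp, metis nth_mem sorted_list_of_set.length_sorted_key_list_of_set
        sorted_list_of_set.set_sorted_key_list_of_set)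
  hence \<alpha>: "\<alpha> \<in> claimed F \<beta> m" using pick Tt unfolding claimed_def claim_def by simp
  have m: "(SOME m'. \<alpha> \<in> claimed F \<beta> m') = m"
    using \<alpha> claimed_disjoint by (blast intro: some_equality)
  have "(THE i'. i' < card (c n) \<and> srt (c n) ! i' = \<alpha>) = i"
    using i len unfolding \<alpha>_def by (auto intro!: the_equality simp: nth_eq_iff_index_eq)
  thus ?thesis using \<alpha> m pick Tt unfolding stage_colour_def \<alpha>_def by (auto simp: Let_def)
qed

text \<open>The selected index is fresh each time the task recurs, since the earlier choices have been
used up; this yields infinitely many candidates realising the new column.\<close>

lemma stage_realizes_candidates:
  assumes t: "t \<in> tasks \<beta>" and inf: "infinite (candidates F t)" and Tt: "T (fst t) = (c, \<delta>, Z)"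
  shows "infinite {n \<in> candidates F t. \<forall>i<card (c n).
           stage_colour F \<beta> (srt (c n) ! i) = Z n i (length (snd t)) (P \<delta> (srt (c n) ! i) \<beta>)}"
    (is "infinite ?S")
proof -
  define M where "M = {m. task \<beta> m = t}"
  define nm where "nm m = the (pick F \<beta> m (used F \<beta> m))" for m
  have pick: "pick F \<beta> m (used F \<beta> m) = Some (nm m)" if "m \<in> M" for m
    using pick_defined[of F \<beta> m] inf that unfolding M_def nm_def by auto
  have good: "disjoint_finite_seq c"
    using inf candidates_disjoint_finite_seq Tt by (metis finite.emptyI fst_conv ex_in_conv)
  have "nm a \<noteq> nm b" if "a \<in> M" "b \<in> M" "a < b" for a b
  proof
    assume eq: "nm a = nm b"
    have "c (nm a) \<subseteq> used F \<beta> b"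
      using claimed_subset_used[OF \<open>a < b\<close>, of F \<beta>] pick[OF \<open>a \<in> M\<close>] Tt \<open>a \<in> M\<close>
      unfolding claimed_def claim_def M_def by simp
    moreover have "c (nm b) \<inter> used F \<beta> b = {}"
      using pick_SomeD(2)[OF pick[OF \<open>b \<in> M\<close>]] Tt \<open>b \<in> M\<close> unfolding M_def by simp
    moreover have "c (nm a) \<noteq> {}" using good by (simp add: disjoint_finite_seq_def)
    ultimately show False using eq by auto
  qed
  hence "inj_on nm M" by (metis inj_onI linorder_neqE_nat)
  hence "infinite (nm ` M)" using task_recurs[OF t] finite_imageD unfolding M_def by blast
  moreover have "nm ` M \<subseteq> ?S"
    using pick_SomeD(1)[OF pick] stage_colour_claimed[OF pick] Tt unfolding M_def by auto
  ultimately show ?thesis using infinite_super by blast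
qed

lemma candidates_snoc:
  assumes Tt: "T \<eta> = (c, \<delta>, Z)" and good: "disjoint_finite_seq c"
    and t: "(\<eta>, s) \<in> tasks \<beta>" and inf: "infinite (candidates col (\<eta>, s))"
  shows "infinite (candidates col (\<eta>, s @ [\<beta>]))"
proof -
  have s: "set s \<subseteq> {x. x < \<beta>}" using t unfolding tasks_def by simp
  let ?S = "{n \<in> candidates col (\<eta>, s). \<forall>i<card (c n). stage_colour (cut col {(x, y). x < y} \<beta>) \<beta>
      (srt (c n) ! i) = Z n i (length s) (P \<delta> (srt (c n) ! i) \<beta>)}"
  have "infinite ?S"
    using stage_realizes_candidates[of "(\<eta>, s)" \<beta> "cut col {(x, y). x < y} \<beta>"] t inf Tt
      candidates_cut[of "(\<eta>, s)" \<beta> col] s by simp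
  moreover have "?S \<subseteq> candidates col (\<eta>, s @ [\<beta>])"
    unfolding candidates_eq[OF Tt good]
    by (auto simp: nth_append less_Suc_eq realizes_def col_unfold[of \<beta>])
  ultimately show ?thesis using infinite_super by blast
qed

text \<open>An \<open>\<aleph>\<^sub>0\<close>-version of \<open>Pr\<^sub>0\<close>, from which all five symbols are read off.\<close>

lemma col_realizes:
  assumes good: "disjoint_finite_seq (c :: nat \<Rightarrow> 'a set)"
  obtains \<gamma> where "\<And>n x. x \<in> c n \<Longrightarrow> x < \<gamma>"
    and "\<And>b. sorted_wrt (<) b \<Longrightarrow> \<forall>\<beta>\<in>set b. \<gamma> < \<beta> \<Longrightarrow>
           \<exists>n. \<forall>j<length b. realizes col c \<delta> Z n j (b ! j)"
proof -
  obtain \<eta> where Tt: "T \<eta> = (c, \<delta>, Z)"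
    using T_onto good unfolding disjoint_finite_seq_def by blast
  have "countable (insert \<eta> (\<Union>n. c n))"
    using good unfolding disjoint_finite_seq_def by (auto intro: countable_finite)
  then obtain \<gamma> where \<gamma>: "\<forall>x\<in>insert \<eta> (\<Union>n. c n). x < \<gamma>"
    using omega1_countable_bounded[OF omega1] by blast
  have "infinite (candidates col (\<eta>, b))" if "sorted_wrt (<) b" "\<forall>\<beta>\<in>set b. \<gamma> < \<beta>" for b
    using that
  proof (induction b rule: rev_induct)
    case Nil
    then show ?case by (simp add: candidates_eq[OF Tt good])
  next
    case (snoc \<beta> s)
    have "(\<eta>, s) \<in> tasks \<beta>"
      using snoc.prems \<gamma> unfolding tasks_def sorted_wrt_append by force
    thus ?case using candidates_snoc[OF Tt good] snoc by (simp add: sorted_wrt_append)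
  qed
  then have "\<exists>n. \<forall>j<length b. realizes col c \<delta> Z n j (b ! j)"
    if "sorted_wrt (<) b" "\<forall>\<beta>\<in>set b. \<gamma> < \<beta>" for b
    using that candidates_eq[OF Tt good] by (metis (no_types, lifting) finite.emptyI mem_Collect_eq ex_in_conv)
  thus thesis using that \<gamma> by blast
qed

lemma col_realizes_singletons:
  assumes A: "infinite A" and B: "uncountable B"
  shows "\<exists>\<alpha>\<in>A. \<exists>\<beta>\<in>B. \<alpha> < \<beta> \<and> col \<beta> \<alpha> = \<zeta> \<alpha> (P \<delta> \<alpha> \<beta>)"
proof -
  obtain e :: "nat \<Rightarrow> 'a" where e: "inj e" "range e \<subseteq> A"
    using infinite_countable_subset A by blast
  have "disjoint_finite_seq (\<lambda>n. {e n})"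
    unfolding disjoint_finite_seq_def using e by (auto simp: inj_eq)
  then obtain \<gamma> where \<gamma>: "\<And>n x. x \<in> {e n} \<Longrightarrow> x < \<gamma>"
    and real: "\<And>b. sorted_wrt (<) b \<Longrightarrow> \<forall>\<beta>\<in>set b. \<gamma> < \<beta> \<Longrightarrow>
       \<exists>n. \<forall>j<length b. realizes col (\<lambda>n. {e n}) \<delta> (\<lambda>n i j. \<zeta> (e n)) n j (b ! j)"
    by (rule col_realizes) blast
  obtain \<beta> where \<beta>: "\<beta> \<in> B" "\<gamma> < \<beta>"
    using omega1_uncountable_unbounded[OF omega1 B] by blast
  obtain n where "realizes col (\<lambda>n. {e n}) \<delta> (\<lambda>n i j. \<zeta> (e n)) n 0 \<beta>"
    using real[of "[\<beta>]"] \<beta> by auto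
  hence "col \<beta> (e n) = \<zeta> (e n) (P \<delta> (e n) \<beta>)" unfolding realizes_def by simp
  moreover have "e n < \<beta>" using \<gamma>[of "e n" n] \<beta>(2) by simp
  ultimately show ?thesis using e \<beta> by blast
qed

lemma col_realizes_blocks:
  assumes unc: "uncountable (\<A> :: 'a set set)"
    and disj: "\<forall>a\<in>\<A>. \<forall>b\<in>\<A>. a \<noteq> b \<longrightarrow> a \<inter> b = {}"
    and card: "\<forall>a\<in>\<A>. finite a \<and> card a = k" and k: "0 < k"
  shows "\<exists>a\<in>\<A>. \<exists>b\<in>\<A>. Max a < Min b \<and> (\<forall>i<k. \<forall>j<k.
           col (srt b ! j) (srt a ! i) = \<zeta> i j (P \<delta> (srt a ! i) (srt b ! j)))"
proof -
  have "infinite \<A>" using unc countable_finite by blast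
  then obtain c :: "nat \<Rightarrow> 'a set" where c: "inj c" "range c \<subseteq> \<A>"
    using infinite_countable_subset by blast
  have ne: "a \<noteq> {}" if "a \<in> \<A>" for a using card k that by fastforce
  have "disjoint_finite_seq c"
    unfolding disjoint_finite_seq_def
  proof (intro conjI allI impI)
    fix n
    show "finite (c n)" and "c n \<noteq> {}" using c card ne by auto
  next
    fix n m :: nat assume "n \<noteq> m"
    hence "c n \<noteq> c m" using c(1) by (simp add: inj_eq)
    thus "c n \<inter> c m = {}" using disj c(2) by blast
  qed
  then obtain \<gamma> where \<gamma>: "\<And>n x. x \<in> c n \<Longrightarrow> x < \<gamma>"
    and real: "\<And>b. sorted_wrt (<) b \<Longrightarrow> \<forall>\<beta>\<in>set b. \<gamma> < \<beta> \<Longrightarrow>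
       \<exists>n. \<forall>j<length b. realizes col c \<delta> (\<lambda>n. \<zeta>) n j (b ! j)"
    by (rule col_realizes) blast
  obtain b where b: "b \<in> \<A>" "\<forall>x\<in>b. \<gamma> < x"
    using omega1_disjoint_family_unbounded[OF omega1 unc disj] by blast
  have "finite b" using b card by blast
  hence "\<forall>\<beta>\<in>set (srt b). \<gamma> < \<beta>" using b by simp
  then obtain n where n: "\<forall>j<length (srt b). realizes col c \<delta> (\<lambda>n. \<zeta>) n j (srt b ! j)"
    using real[of "srt b"] by auto
  have a: "c n \<in> \<A>" using c by auto
  have "Max (c n) \<in> c n" and "Min b \<in> b"
    using a b card ne by (simp_all add: Max_in Min_in)
  hence "Max (c n) < Min b"
    using \<gamma> b by (meson less_trans)
  moreover have "\<forall>i<k. \<forall>j<k. col (srt b ! j) (srt (c n) ! i) = \<zeta> i j (P \<delta> (srt (c n) ! i) (srt b ! j))"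
    using n a b card unfolding realizes_def by simp
  ultimately show ?thesis using a b by blast
qed

lemma strong_col_rectangle:
  assumes "uncountable A" and "uncountable B"
  shows "strong (\<lambda>\<alpha> \<beta>. col \<beta> \<alpha>) (P \<delta>) (A \<circledast> B)"
  unfolding strong_def
proof
  fix \<zeta> :: "nat \<Rightarrow> 'a"
  have "infinite A" using assms(1) countable_finite by blast
  then obtain \<alpha> \<beta> where "\<alpha> \<in> A" "\<beta> \<in> B" "\<alpha> < \<beta>" "col \<beta> \<alpha> = \<zeta> (P \<delta> \<alpha> \<beta>)"
    using col_realizes_singletons[OF _ assms(2), of A "\<lambda>_. \<zeta>" \<delta>] by blast
  thus "\<exists>(\<alpha>, \<beta>)\<in>A \<circledast> B. col \<beta> \<alpha> = \<zeta> (P \<delta> \<alpha> \<beta>)"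
    unfolding circledast_def by blast
qed

lemma neg_sq: "neg_sq P"
  unfolding neg_sq_def using strong_col_rectangle by blast

lemma neg_rect: "neg_rect P"
  unfolding neg_rect_def using strong_col_rectangle by blast

lemma neg_one_rect: "neg_one_rect P"
  unfolding neg_one_rect_def
proof (intro exI[of _ "\<lambda>\<alpha> \<beta>. col \<beta> \<alpha>"] allI impI)
  fix \<delta> and A B :: "'a set"
  assume "countable A" "infinite A" "uncountable B"
  show "\<exists>\<alpha>\<in>A. strong (\<lambda>\<alpha> \<beta>. col \<beta> \<alpha>) (P \<delta>) ({\<alpha>} \<circledast> B)"
  proof (rule ccontr)
    assume "\<not> ?thesis"
    then obtain \<zeta> where "\<forall>\<alpha>\<in>A. \<forall>\<beta>\<in>B. \<alpha> < \<beta> \<longrightarrow> col \<beta> \<alpha> \<noteq> \<zeta> \<alpha> (P \<delta> \<alpha> \<beta>)"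
      unfolding strong_def circledast_def by (auto simp: Ball_def) metis
    thus False
      using col_realizes_singletons[OF \<open>infinite A\<close> \<open>uncountable B\<close>, of \<zeta> \<delta>] by blast
  qed
qed

lemma Pr0: "Pr0 P"
  unfolding Pr0_def
proof (intro exI[of _ "\<lambda>\<alpha> \<beta>. col \<beta> \<alpha>"] allI impI)
  fix \<delta> :: 'a and \<xi> :: nat and \<A> :: "'a set set" and \<zeta> :: "nat \<Rightarrow> nat \<Rightarrow> nat \<Rightarrow> 'a"
  assume card: "\<forall>a\<in>\<A>. finite a \<and> card a = \<xi>"
    and disj: "\<forall>a\<in>\<A>. \<forall>b\<in>\<A>. a \<noteq> b \<longrightarrow> a \<inter> b = {}" and unc: "uncountable \<A>"
  have "0 < \<xi>"
  proof (rule ccontr)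
    assume "\<not> 0 < \<xi>"
    hence "\<A> \<subseteq> {{}}" using card by auto
    hence "finite \<A>" by (rule finite_subset) simp
    thus False using unc countable_finite by blast
  qed
  thus "\<exists>a\<in>\<A>. \<exists>b\<in>\<A>. Max a < Min b \<and> (\<forall>i<\<xi>. \<forall>j<\<xi>.
          col (srt b ! j) (srt a ! i) = \<zeta> i j (P \<delta> (srt a ! i) (srt b ! j)))"
    using col_realizes_blocks[OF unc disj card] by blast
qed

lemma Pr1: "Pr1 P"
  unfolding Pr1_def
proof (intro exI[of _ "\<lambda>\<alpha> \<beta>. col \<beta> \<alpha>"] allI impI)
  fix \<delta> :: 'a and \<xi> :: nat and \<A> :: "'a set set" and \<zeta> :: "nat \<Rightarrow> 'a"
  assume card: "\<forall>a\<in>\<A>. finite a \<and> card a < \<xi> \<and> a \<noteq> {}"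
    and disj: "\<forall>a\<in>\<A>. \<forall>b\<in>\<A>. a \<noteq> b \<longrightarrow> a \<inter> b = {}" and unc: "uncountable \<A>"
  have "\<exists>k. uncountable {a\<in>\<A>. card a = k}"
  proof (rule ccontr)
    assume "\<nexists>k. uncountable {a\<in>\<A>. card a = k}"
    hence "countable (\<Union>k<\<xi>. {a\<in>\<A>. card a = k})" by (intro countable_UN) auto
    moreover have "\<A> = (\<Union>k<\<xi>. {a\<in>\<A>. card a = k})" using card by auto
    ultimately show False using unc by simp
  qed
  then obtain k where unc_k: "uncountable {a\<in>\<A>. card a = k}" ..
  hence "{a\<in>\<A>. card a = k} \<noteq> {}" using countable_empty by metis
  then obtain a0 where "a0 \<in> \<A>" "card a0 = k" by blast
  hence "0 < k" using card card_gt_0_iff by blast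
  moreover have "\<forall>a\<in>{a\<in>\<A>. card a = k}. \<forall>b\<in>{a\<in>\<A>. card a = k}. a \<noteq> b \<longrightarrow> a \<inter> b = {}"
    and "\<forall>a\<in>{a\<in>\<A>. card a = k}. finite a \<and> card a = k"
    using disj card by auto
  ultimately obtain a b where a: "a \<in> \<A>" "card a = k" and b: "b \<in> \<A>" "card b = k"
    and "Max a < Min b"
    and col: "\<forall>i<k. \<forall>j<k. col (srt b ! j) (srt a ! i) = \<zeta> (P \<delta> (srt a ! i) (srt b ! j))"
    using col_realizes_blocks[OF unc_k, of k "\<lambda>i j. \<zeta>" \<delta>] by blast
  moreover have "col \<beta> \<alpha> = \<zeta> (P \<delta> \<alpha> \<beta>)" if "\<alpha> \<in> a" "\<beta> \<in> b" for \<alpha> \<beta>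
  proof -
    have "finite a" "finite b" using a b card by auto
    hence "\<alpha> \<in> set (srt a)" "\<beta> \<in> set (srt b)" "length (srt a) = k" "length (srt b) = k"
      using that a b by auto
    then obtain i j where "i < k" "srt a ! i = \<alpha>" "j < k" "srt b ! j = \<beta>"
      by (metis in_set_conv_nth)
    thus ?thesis using col by blast
  qed
  ultimately show "\<exists>a\<in>\<A>. \<exists>b\<in>\<A>. Max a < Min b \<and> (\<forall>\<alpha>\<in>a. \<forall>\<beta>\<in>b. col \<beta> \<alpha> = \<zeta> (P \<delta> \<alpha> \<beta>))"
    by blast
qed

end

theorem theorem5p1:
  fixes pbar :: "'a::wellorder \<Rightarrow> 'a \<Rightarrow> 'a \<Rightarrow> nat"
  assumes "omega1_type TYPE('a)"
    and "CH TYPE('a)"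
  shows "neg_sq pbar \<and> neg_rect pbar \<and> neg_one_rect pbar \<and> Pr1 pbar \<and> Pr0 pbar"
proof -
  obtain T :: "'a \<Rightarrow> 'a pattern"
    where "\<forall>c \<delta> Z. (\<forall>n. finite (c n)) \<longrightarrow> (\<exists>\<eta>. T \<eta> = (c, \<delta>, Z))"
    using CH_enumerates_patterns[OF assms(2)] by blast
  then interpret pattern_enumeration pbar T
    using assms(1) by unfold_locales blast+
  show ?thesis using neg_sq neg_rect neg_one_rect Pr1 Pr0 by blast
qed

end
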